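(* Let $X$ be a finite-dimensional simplicial complex satisfying: (1) for all vertices $x,y$ of $X$, $\Sigma_x\subseteq\Sigma_y$ implies $x=y$; (2) if $K$ is a simplex of $X$ and $x$ is a vertex of $X$ with $x\notin K$, then there is a maximal simplex $L$ of $X$ with $K\subseteq L$ and $x\notin L$. Then the map $\Omega\colon\mathrm{Aut}(X)\to\mathrm{Aut}(\mathcal{N}(X))$, $\Omega(\varphi)=\varphi_*$, is surjective.
   Context: For a vertex $x$ of $X$, $\Sigma_x$ is the collection of maximal simplices of $X$ containing $x$. $\mathcal{N}(X)$ is the nerve of the collection of maximal simplices of $X$ (vertices: maximal simplices of $X$; a finite set of them is a simplex iff their common intersection is non-empty). For $\varphi\in\mathrm{Aut}(X)$ (simplicial automorphisms), $\varphi_*$ is the simplicial automorphism of $\mathcal{N}(X)$ given on vertices by $\varphi_*(K)=\varphi(K)$. *)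

theory Defs
  imports Main
begin

definition vertices :: "'a set set \<Rightarrow> 'a set" where
  "vertices S = \<Union>S"

definition simplicial_complex :: "'a set set \<Rightarrow> bool" where
  "simplicial_complex S \<longleftrightarrow>
     (\<forall>s\<in>S. finite s \<and> s \<noteq> {}) \<and>
     (\<forall>s\<in>S. \<forall>t. t \<subseteq> s \<and> t \<noteq> {} \<longrightarrow> t \<in> S)"

definition finite_dimensional :: "'a set set \<Rightarrow> bool" where
  "finite_dimensional S \<longleftrightarrow> (\<exists>n::nat. \<forall>s\<in>S. card s \<le> n)"

definition maximal_simplices :: "'a set set \<Rightarrow> 'a set set" where
  "maximal_simplices S = {s \<in> S. \<not> (\<exists>t\<in>S. s \<subset> t)}"

definition Sigma_at :: "'a set set \<Rightarrow> 'a \<Rightarrow> 'a set set" where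
  "Sigma_at S x = {K \<in> maximal_simplices S. x \<in> K}"

definition nerve :: "'a set set \<Rightarrow> 'a set set set" where
  "nerve S = {F. finite F \<and> F \<noteq> {} \<and> F \<subseteq> maximal_simplices S \<and> \<Inter>F \<noteq> {}}"

definition simplicial_aut :: "'a set set \<Rightarrow> ('a \<Rightarrow> 'a) set" where
  "simplicial_aut S = {\<phi>. bij_betw \<phi> (vertices S) (vertices S) \<and>
      (\<forall>s. s \<subseteq> vertices S \<longrightarrow> (s \<in> S \<longleftrightarrow> \<phi> ` s \<in> S))}"

end

theory Submission
  imports Defs
begin

text \<open>Given an automorphism \<psi> of the nerve, a vertex x should go to the vertex y with
\<Sigma>_y = \<psi> ` \<Sigma>_x. Every finite subfamily of \<psi> ` \<Sigma>_x is a simplex of the nerve, so it has a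
common vertex; since its members are finite sets, the whole family \<psi> ` \<Sigma>_x has a common
vertex y, i.e. \<psi> ` \<Sigma>_x \<subseteq> \<Sigma>_y. Running the same argument for the inverse of \<psi> and using that vertices are
separated by their stars turns this inclusion into an equality. The resulting vertex map
\<phi> satisfies x \<in> K \<longleftrightarrow> \<phi> x \<in> \<psi> K, hence \<psi> K = \<phi> ` K, and a bijection of the vertices that
permutes the maximal simplices is a simplicial automorphism.\<close>

lemma simplicial_complex_face:
  assumes "simplicial_complex X" "s \<in> X" "t \<subseteq> s" "t \<noteq> {}"
  shows "t \<in> X"
  using assms unfolding simplicial_complex_def by blast

lemma simplicial_complex_simplex_nonempty:
  assumes "simplicial_complex X" "s \<in> X"
  shows "s \<noteq> {}"
  using assms unfolding simplicial_complex_def by blast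

lemma maximal_simplicesD:
  assumes "simplicial_complex X" "K \<in> maximal_simplices X"
  shows "K \<in> X" "finite K" "K \<noteq> {}" "K \<subseteq> vertices X"
  using assms unfolding maximal_simplices_def simplicial_complex_def vertices_def by auto

lemma singleton_in_simplicial_complex:
  assumes "simplicial_complex X" "x \<in> vertices X"
  shows "{x} \<in> X"
  using assms simplicial_complex_face unfolding vertices_def by blast

lemma maximal_simplex_superset:
  assumes "simplicial_complex X" "finite_dimensional X" "s \<in> X"
  obtains K where "K \<in> maximal_simplices X" "s \<subseteq> K"
proof -
  obtain n where n: "\<forall>t\<in>X. card t \<le> n"
    using assms(2) unfolding finite_dimensional_def by blast
  obtain t where t: "t \<in> X" "s \<subseteq> t"
    and largest: "\<And>u. u \<in> X \<Longrightarrow> s \<subseteq> u \<Longrightarrow> n - card t \<le> n - card u"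
    using ex_has_least_nat[of "\<lambda>t. t \<in> X \<and> s \<subseteq> t" s "\<lambda>t. n - card t"] assms(3) by blast
  have "\<not> t \<subset> u" if "u \<in> X" for u
  proof
    assume "t \<subset> u"
    moreover have "finite u"
      using assms(1) \<open>u \<in> X\<close> unfolding simplicial_complex_def by blast
    ultimately have "card t < card u" by (rule psubset_card_mono[rotated])
    moreover have "card u \<le> n" using n \<open>u \<in> X\<close> by blast
    moreover have "n - card t \<le> n - card u" using largest \<open>u \<in> X\<close> \<open>t \<subset> u\<close> t(2) by blast
    ultimately show False by linarith
  qed
  then have "t \<in> maximal_simplices X" using t(1) unfolding maximal_simplices_def by blast
  then show thesis using t(2) by (rule that)
qed

lemma vertices_nerve:
  assumes "simplicial_complex X"
  shows "vertices (nerve X) = maximal_simplices X"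
proof
  show "vertices (nerve X) \<subseteq> maximal_simplices X"
    unfolding vertices_def nerve_def by blast
  show "maximal_simplices X \<subseteq> vertices (nerve X)"
  proof
    fix K assume K: "K \<in> maximal_simplices X"
    then have "{K} \<in> nerve X" using maximal_simplicesD[OF assms K] unfolding nerve_def by auto
    then show "K \<in> vertices (nerve X)" unfolding vertices_def by blast
  qed
qed

lemma Sigma_at_subset_maximal_simplices: "Sigma_at X x \<subseteq> maximal_simplices X"
  unfolding Sigma_at_def by blast

lemma simplicial_aut_image_simplex:
  assumes "\<phi> \<in> simplicial_aut S" "s \<in> S"
  shows "\<phi> ` s \<in> S"
  using assms unfolding simplicial_aut_def vertices_def by blast

lemma simplicial_aut_inv_into:
  assumes "\<phi> \<in> simplicial_aut S"
  shows "inv_into (vertices S) \<phi> \<in> simplicial_aut S"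
proof -
  let ?V = "vertices S" and ?\<phi>' = "inv_into (vertices S) \<phi>"
  have bij: "bij_betw \<phi> ?V ?V" and simplex_iff: "\<And>s. s \<subseteq> ?V \<Longrightarrow> s \<in> S \<longleftrightarrow> \<phi> ` s \<in> S"
    using assms unfolding simplicial_aut_def by blast+
  have bij': "bij_betw ?\<phi>' ?V ?V" using bij by (rule bij_betw_inv_into)
  have "s \<in> S \<longleftrightarrow> ?\<phi>' ` s \<in> S" if "s \<subseteq> ?V" for s
  proof -
    have "\<phi> ` ?\<phi>' ` s = s"
      using that bij by (simp add: image_inv_into_cancel bij_betw_imp_surj_on)
    moreover have "?\<phi>' ` s \<subseteq> ?V" using that bij' bij_betwE by blast
    ultimately show ?thesis using simplex_iff by metis
  qed
  with bij' show ?thesis unfolding simplicial_aut_def by blast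
qed

lemma Inter_nonempty_if_finite_subfamilies:
  assumes "K \<in> \<F>" "finite K"
    and finite_subfamilies: "\<And>\<G>. finite \<G> \<Longrightarrow> \<G> \<noteq> {} \<Longrightarrow> \<G> \<subseteq> \<F> \<Longrightarrow> \<Inter>\<G> \<noteq> {}"
  shows "\<Inter>\<F> \<noteq> {}"
proof -
  define avoid where "avoid z = (SOME L. L \<in> \<F> \<and> z \<notin> L)" for z
  have avoid: "avoid z \<in> \<F> \<and> z \<notin> avoid z" if "z \<notin> \<Inter>\<F>" for z
    unfolding avoid_def by (rule someI_ex) (use that in blast)
  define \<G> where "\<G> = insert K (avoid ` (K - \<Inter>\<F>))"
  have "\<Inter>\<G> \<noteq> {}"
    by (rule finite_subfamilies) (use assms(1,2) avoid in \<open>auto simp: \<G>_def\<close>)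
  moreover have "\<Inter>\<G> \<subseteq> \<Inter>\<F>"
    using avoid unfolding \<G>_def by blast
  ultimately show ?thesis by blast
qed

lemma bij_betw_nerve_aut:
  assumes "simplicial_complex X" "\<psi> \<in> simplicial_aut (nerve X)"
  shows "bij_betw \<psi> (maximal_simplices X) (maximal_simplices X)"
  using assms vertices_nerve[OF assms(1)] unfolding simplicial_aut_def by simp

lemma nerve_aut_star_subset_star:
  assumes sc: "simplicial_complex X" and fd: "finite_dimensional X"
    and \<psi>: "\<psi> \<in> simplicial_aut (nerve X)" and x: "x \<in> vertices X"
  obtains y where "y \<in> vertices X" "\<psi> ` Sigma_at X x \<subseteq> Sigma_at X y"
proof -
  have \<psi>_maximal: "\<psi> ` maximal_simplices X = maximal_simplices X"
    using bij_betw_nerve_aut[OF sc \<psi>] by (rule bij_betw_imp_surj_on)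
  obtain K where K: "K \<in> maximal_simplices X" "x \<in> K"
    using maximal_simplex_superset[OF sc fd singleton_in_simplicial_complex[OF sc x]] by blast
  then have K_star: "K \<in> Sigma_at X x" unfolding Sigma_at_def by blast
  have \<psi>K: "\<psi> K \<in> maximal_simplices X" using \<psi>_maximal K(1) by blast
  have "\<Inter>(\<psi> ` Sigma_at X x) \<noteq> {}"
  proof (rule Inter_nonempty_if_finite_subfamilies)
    show "\<psi> K \<in> \<psi> ` Sigma_at X x" using K_star by blast
    show "finite (\<psi> K)" using maximal_simplicesD(2)[OF sc \<psi>K] .
    fix \<G> assume \<G>: "finite \<G>" "\<G> \<noteq> {}" "\<G> \<subseteq> \<psi> ` Sigma_at X x"
    then obtain F where F: "F \<subseteq> Sigma_at X x" "finite F" "\<G> = \<psi> ` F"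
      by (meson finite_subset_image)
    then have "F \<in> nerve X"
      using \<G>(2) unfolding nerve_def Sigma_at_def by blast
    then have "\<psi> ` F \<in> nerve X" by (rule simplicial_aut_image_simplex[OF \<psi>])
    then show "\<Inter>\<G> \<noteq> {}" unfolding nerve_def F(3) by blast
  qed
  then obtain y where y: "y \<in> \<Inter>(\<psi> ` Sigma_at X x)" by blast
  then have "y \<in> vertices X"
    using K_star maximal_simplicesD(4)[OF sc \<psi>K] by blast
  moreover have "\<psi> ` Sigma_at X x \<subseteq> Sigma_at X y"
    using y \<psi>_maximal Sigma_at_subset_maximal_simplices unfolding Sigma_at_def by blast
  ultimately show thesis by (rule that)
qed

lemma nerve_aut_inv_image_cancel:
  assumes sc: "simplicial_complex X" and \<psi>: "\<psi> \<in> simplicial_aut (nerve X)"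
    and A: "A \<subseteq> maximal_simplices X"
  defines "\<psi>' \<equiv> inv_into (vertices (nerve X)) \<psi>"
  shows "\<psi>' ` \<psi> ` A = A" "\<psi> ` \<psi>' ` A = A"
  using A bij_betw_nerve_aut[OF sc \<psi>] unfolding \<psi>'_def vertices_nerve[OF sc]
  by (simp_all add: bij_betw_def inv_into_image_cancel image_inv_into_cancel)

lemma nerve_aut_star_eq_star:
  assumes sc: "simplicial_complex X" and fd: "finite_dimensional X"
    and separated: "\<And>x y. x \<in> vertices X \<Longrightarrow> y \<in> vertices X \<Longrightarrow>
            Sigma_at X x \<subseteq> Sigma_at X y \<Longrightarrow> x = y"
    and \<psi>: "\<psi> \<in> simplicial_aut (nerve X)" and x: "x \<in> vertices X"
  obtains y where "y \<in> vertices X" "Sigma_at X y = \<psi> ` Sigma_at X x"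
proof -
  define \<psi>' where "\<psi>' = inv_into (vertices (nerve X)) \<psi>"
  have \<psi>': "\<psi>' \<in> simplicial_aut (nerve X)"
    unfolding \<psi>'_def using \<psi> by (rule simplicial_aut_inv_into)
  have cancel: "\<psi>' ` \<psi> ` Sigma_at X w = Sigma_at X w" "\<psi> ` \<psi>' ` Sigma_at X w = Sigma_at X w" for w
    using nerve_aut_inv_image_cancel[OF sc \<psi> Sigma_at_subset_maximal_simplices]
    unfolding \<psi>'_def by blast+
  obtain y where y: "y \<in> vertices X" "\<psi> ` Sigma_at X x \<subseteq> Sigma_at X y"
    using nerve_aut_star_subset_star[OF sc fd \<psi> x] .
  obtain z where z: "z \<in> vertices X" "\<psi>' ` Sigma_at X y \<subseteq> Sigma_at X z"
    using nerve_aut_star_subset_star[OF sc fd \<psi>' y(1)] .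
  have "Sigma_at X x = \<psi>' ` \<psi> ` Sigma_at X x"
    by (simp only: cancel)
  also have "\<dots> \<subseteq> Sigma_at X z" using y(2) z(2) by blast
  finally have "x = z" using separated x z(1) by blast
  have "Sigma_at X y = \<psi> ` \<psi>' ` Sigma_at X y"
    by (simp only: cancel)
  also have "\<dots> \<subseteq> \<psi> ` Sigma_at X x" using z(2) \<open>x = z\<close> by blast
  finally have "Sigma_at X y = \<psi> ` Sigma_at X x" using y(2) by blast
  with y(1) show thesis by (rule that)
qed

lemma simplicial_autI_maximal_simplices:
  assumes sc: "simplicial_complex X" and fd: "finite_dimensional X"
    and bij: "bij_betw \<phi> (vertices X) (vertices X)"
    and maximal: "(\<lambda>K. \<phi> ` K) ` maximal_simplices X = maximal_simplices X"
  shows "\<phi> \<in> simplicial_aut X"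
proof -
  have inj: "inj_on \<phi> (vertices X)" using bij by (rule bij_betw_imp_inj_on)
  have "s \<in> X \<longleftrightarrow> \<phi> ` s \<in> X" if s: "s \<subseteq> vertices X" for s
  proof
    assume "s \<in> X"
    then obtain K where K: "K \<in> maximal_simplices X" "s \<subseteq> K"
      using maximal_simplex_superset[OF sc fd] by blast
    have "\<phi> ` K \<in> X" using maximal K(1) maximal_simplicesD(1)[OF sc] by blast
    moreover have "\<phi> ` s \<subseteq> \<phi> ` K" using K(2) by (rule image_mono)
    moreover have "\<phi> ` s \<noteq> {}" using simplicial_complex_simplex_nonempty[OF sc \<open>s \<in> X\<close>] by simp
    ultimately show "\<phi> ` s \<in> X" by (rule simplicial_complex_face[OF sc])
  next
    assume "\<phi> ` s \<in> X"
    then obtain L where L: "L \<in> maximal_simplices X" "\<phi> ` s \<subseteq> L"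
      using maximal_simplex_superset[OF sc fd] by blast
    then have "L \<in> (\<lambda>K. \<phi> ` K) ` maximal_simplices X" using maximal by simp
    then obtain K where K: "K \<in> maximal_simplices X" "\<phi> ` s \<subseteq> \<phi> ` K"
      using L(2) by blast
    have "K \<in> X" using maximal_simplicesD(1)[OF sc K(1)] .
    moreover have "s \<subseteq> K"
    proof
      fix a assume "a \<in> s"
      then have "\<phi> a \<in> \<phi> ` K" using K(2) by blast
      then show "a \<in> K"
        using inj_on_image_mem_iff[OF inj _ maximal_simplicesD(4)[OF sc K(1)]] s \<open>a \<in> s\<close> by blast
    qed
    moreover have "s \<noteq> {}"
      using simplicial_complex_simplex_nonempty[OF sc \<open>\<phi> ` s \<in> X\<close>] by simp
    ultimately show "s \<in> X" by (rule simplicial_complex_face[OF sc])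
  qed
  with bij show ?thesis unfolding simplicial_aut_def by blast
qed

definition vertex_map_of_nerve_aut :: "'a set set \<Rightarrow> ('a set \<Rightarrow> 'a set) \<Rightarrow> 'a \<Rightarrow> 'a" where
  "vertex_map_of_nerve_aut X \<psi> x = (SOME y. y \<in> vertices X \<and> Sigma_at X y = \<psi> ` Sigma_at X x)"

context
  fixes X :: "'a set set" and \<psi> :: "'a set \<Rightarrow> 'a set"
  assumes sc: "simplicial_complex X" and fd: "finite_dimensional X"
    and separated: "\<And>x y. x \<in> vertices X \<Longrightarrow> y \<in> vertices X \<Longrightarrow>
            Sigma_at X x \<subseteq> Sigma_at X y \<Longrightarrow> x = y"
    and \<psi>: "\<psi> \<in> simplicial_aut (nerve X)"
begin

lemma vertex_map_of_nerve_aut_star: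
  assumes "x \<in> vertices X"
  shows "vertex_map_of_nerve_aut X \<psi> x \<in> vertices X"
    "Sigma_at X (vertex_map_of_nerve_aut X \<psi> x) = \<psi> ` Sigma_at X x"
proof -
  obtain y where "y \<in> vertices X" "Sigma_at X y = \<psi> ` Sigma_at X x"
    using nerve_aut_star_eq_star[OF sc fd separated \<psi> assms] .
  then have "\<exists>y. y \<in> vertices X \<and> Sigma_at X y = \<psi> ` Sigma_at X x" by blast
  from someI_ex[OF this]
  show "vertex_map_of_nerve_aut X \<psi> x \<in> vertices X"
    "Sigma_at X (vertex_map_of_nerve_aut X \<psi> x) = \<psi> ` Sigma_at X x"
    unfolding vertex_map_of_nerve_aut_def by blast+
qed

lemma bij_betw_vertex_map_of_nerve_aut:
  "bij_betw (vertex_map_of_nerve_aut X \<psi>) (vertices X) (vertices X)"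
proof -
  let ?\<phi> = "vertex_map_of_nerve_aut X \<psi>"
  have inj: "inj_on \<psi> (maximal_simplices X)"
    using bij_betw_nerve_aut[OF sc \<psi>] by (rule bij_betw_imp_inj_on)
  have "inj_on ?\<phi> (vertices X)"
  proof (rule inj_onI)
    fix x x' assume x: "x \<in> vertices X" "x' \<in> vertices X" and "?\<phi> x = ?\<phi> x'"
    then have "\<psi> ` Sigma_at X x = \<psi> ` Sigma_at X x'"
      using vertex_map_of_nerve_aut_star(2) by metis
    then have "Sigma_at X x = Sigma_at X x'"
      using inj Sigma_at_subset_maximal_simplices by (meson inj_on_image_eq_iff)
    then show "x = x'" using separated x by blast
  qed
  moreover have "y \<in> ?\<phi> ` vertices X" if y: "y \<in> vertices X" for y
  proof -
    define \<psi>' where "\<psi>' = inv_into (vertices (nerve X)) \<psi>"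
    have \<psi>': "\<psi>' \<in> simplicial_aut (nerve X)"
      unfolding \<psi>'_def using \<psi> by (rule simplicial_aut_inv_into)
    obtain x where x: "x \<in> vertices X" "Sigma_at X x = \<psi>' ` Sigma_at X y"
      using nerve_aut_star_eq_star[OF sc fd separated \<psi>' y] .
    have "Sigma_at X (?\<phi> x) = \<psi> ` \<psi>' ` Sigma_at X y"
      using vertex_map_of_nerve_aut_star(2)[OF x(1)] x(2) by simp
    also have "\<dots> = Sigma_at X y"
      unfolding \<psi>'_def by (rule nerve_aut_inv_image_cancel[OF sc \<psi> Sigma_at_subset_maximal_simplices])
    finally have "?\<phi> x = y"
      using separated vertex_map_of_nerve_aut_star(1)[OF x(1)] y by blast
    with x(1) show ?thesis by blast
  qed
  ultimately show ?thesis
    using vertex_map_of_nerve_aut_star(1) unfolding bij_betw_def by blast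
qed

lemma nerve_aut_eq_image_vertex_map:
  assumes K: "K \<in> maximal_simplices X"
  shows "\<psi> K = vertex_map_of_nerve_aut X \<psi> ` K"
proof -
  let ?\<phi> = "vertex_map_of_nerve_aut X \<psi>"
  have inj: "inj_on \<psi> (maximal_simplices X)"
    using bij_betw_nerve_aut[OF sc \<psi>] by (rule bij_betw_imp_inj_on)
  have \<psi>K: "\<psi> K \<in> maximal_simplices X"
    using bij_betw_nerve_aut[OF sc \<psi>] K by (rule bij_betw_apply)
  have mem_iff: "x \<in> K \<longleftrightarrow> ?\<phi> x \<in> \<psi> K" if x: "x \<in> vertices X" for x
  proof -
    have "x \<in> K \<longleftrightarrow> K \<in> Sigma_at X x" using K unfolding Sigma_at_def by blast
    also have "\<dots> \<longleftrightarrow> \<psi> K \<in> \<psi> ` Sigma_at X x"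
      using inj K Sigma_at_subset_maximal_simplices by (rule inj_on_image_mem_iff[symmetric])
    also have "\<dots> \<longleftrightarrow> \<psi> K \<in> Sigma_at X (?\<phi> x)"
      using vertex_map_of_nerve_aut_star(2)[OF x] by simp
    also have "\<dots> \<longleftrightarrow> ?\<phi> x \<in> \<psi> K" using \<psi>K unfolding Sigma_at_def by blast
    finally show ?thesis .
  qed
  have "\<psi> K \<subseteq> ?\<phi> ` vertices X"
    using maximal_simplicesD(4)[OF sc \<psi>K] bij_betw_vertex_map_of_nerve_aut
    unfolding bij_betw_def by simp
  then show ?thesis
    using mem_iff maximal_simplicesD(4)[OF sc K] by blast
qed

end

theorem proposition3p9:
  fixes X :: "'a set set"
  assumes "simplicial_complex X"
    and "finite_dimensional X"
    and "\<And>x y. x \<in> vertices X \<Longrightarrow> y \<in> vertices X \<Longrightarrow>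
            Sigma_at X x \<subseteq> Sigma_at X y \<Longrightarrow> x = y"
    and "\<And>K x. K \<in> X \<Longrightarrow> x \<in> vertices X \<Longrightarrow> x \<notin> K \<Longrightarrow>
            \<exists>L \<in> maximal_simplices X. K \<subseteq> L \<and> x \<notin> L"
  shows "\<forall>\<psi> \<in> simplicial_aut (nerve X). \<exists>\<phi> \<in> simplicial_aut X.
            \<forall>K \<in> maximal_simplices X. \<psi> K = \<phi> ` K"
proof
  \<comment> \<open>Surjectivity does not need the fourth hypothesis.\<close>
  fix \<psi> assume \<psi>: "\<psi> \<in> simplicial_aut (nerve X)"
  let ?\<phi> = "vertex_map_of_nerve_aut X \<psi>"
  have image_eq: "\<psi> K = ?\<phi> ` K" if "K \<in> maximal_simplices X" for K
    using nerve_aut_eq_image_vertex_map[OF assms(1-3) \<psi> that] .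
  have "(\<lambda>K. ?\<phi> ` K) ` maximal_simplices X = \<psi> ` maximal_simplices X"
    using image_eq by (simp cong: image_cong)
  also have "\<dots> = maximal_simplices X"
    using bij_betw_nerve_aut[OF assms(1) \<psi>] by (rule bij_betw_imp_surj_on)
  finally have "?\<phi> \<in> simplicial_aut X"
    using simplicial_autI_maximal_simplices[OF assms(1,2)]
      bij_betw_vertex_map_of_nerve_aut[OF assms(1-3) \<psi>] by blast
  with image_eq show "\<exists>\<phi> \<in> simplicial_aut X. \<forall>K \<in> maximal_simplices X. \<psi> K = \<phi> ` K"
    by blast
qed

end
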